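(* Let $(X,\tau)$ be a Hausdorff topological vector space over $\mathbb{R}$ which is quasi-point-separable. Then $X$ has the fixed point property: for every nonempty, compact, convex subset $C\subseteq X$ and every $\tau$-continuous mapping $f:C\to C$, there exists $x_0\in C$ with $f(x_0)=x_0$.
   Context: All vector spaces are real; $\theta$ denotes the origin of $X$ and $\mathbb{R}^+=[0,\infty)$. A function $u:X\to\mathbb{R}^+$ is called m-quasiconvex if $u(\theta)=0$ and for all $x_1,x_2\in X$ and $0\le\alpha\le1$ one has $u(\alpha x_1+(1-\alpha)x_2)\le\max\{u(x_1),u(x_2)\}$. A topological vector space $(X,\tau)$ is called quasi-point-separable if there is a family $\{u_\lambda\}_{\lambda\in\Lambda}$ of $\tau$-continuous m-quasiconvex functions on $X$ such that, for $x\in X$, $u_\lambda(x)=0$ for every $\lambda\in\Lambda$ implies $x=\theta$; such a family is called a quasi-point-separating space for $X$. *)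

theory Defs
  imports "HOL-Analysis.Analysis"
begin

definition tvs :: "'a::real_vector topology \<Rightarrow> bool" where
  "tvs T \<longleftrightarrow> topspace T = UNIV
     \<and> continuous_map (prod_topology T T) T (\<lambda>(x, y). x + y)
     \<and> continuous_map (prod_topology euclideanreal T) T (\<lambda>(a, x). a *\<^sub>R x)"

definition m_quasiconvex :: "('a::real_vector \<Rightarrow> real) \<Rightarrow> bool" where
  "m_quasiconvex u \<longleftrightarrow> (\<forall>x. u x \<ge> 0) \<and> u 0 = 0
     \<and> (\<forall>x1 x2 \<alpha>. 0 \<le> \<alpha> \<and> \<alpha> \<le> 1 \<longrightarrow>
           u (\<alpha> *\<^sub>R x1 + (1 - \<alpha>) *\<^sub>R x2) \<le> max (u x1) (u x2))"

definition quasi_point_separating :: "'a::real_vector topology \<Rightarrow> ('l \<Rightarrow> 'a \<Rightarrow> real) \<Rightarrow> 'l set \<Rightarrow> bool" where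
  "quasi_point_separating T u L \<longleftrightarrow>
     (\<forall>l\<in>L. continuous_map T euclideanreal (u l) \<and> m_quasiconvex (u l))
     \<and> (\<forall>x. (\<forall>l\<in>L. u l x = 0) \<longrightarrow> x = 0)"

text \<open>Index families by sets of functions (any indexed family can be replaced by its range).\<close>
definition quasi_point_separable :: "'a::real_vector topology \<Rightarrow> bool" where
  "quasi_point_separable T \<longleftrightarrow> (\<exists>U :: ('a \<Rightarrow> real) set. quasi_point_separating T (\<lambda>u. u) U)"

end

theory Submission
  imports Defs "HOL-Homology.Brouwer_Degree"
begin

text \<open>If \<open>f\<close> had no fixed point, the compact set \<open>K\<close> of displacements \<open>y - f y\<close> would miss \<open>0\<close>;
  by compactness finitely many separating functions \<open>u\<close> and an \<open>\<epsilon> > 0\<close> satisfy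
  \<open>max\<^sub>u u w \<ge> \<epsilon>\<close> on \<open>K\<close>, and m-quasiconvexity makes \<open>V = {w. \<forall>u. u w < \<epsilon>}\<close> a convex
  neighbourhood of \<open>0\<close> disjoint from \<open>K\<close>.  As in Schauder's projection argument, a partition of
  unity on \<open>C\<close> subordinate to the translates \<open>x\<^sub>j - V\<close> lets \<open>f\<close> factor, up to an error in \<open>V\<close>,
  through a finite-dimensional simplex, and Brouwer's theorem there (derived from the
  non-contractibility of spheres) yields a point moved by a vector of \<open>V\<close>.\<close>

definition fixed_point_property :: "'a topology \<Rightarrow> bool" where
  "fixed_point_property X \<longleftrightarrow> (\<forall>g. continuous_map X X g \<longrightarrow> (\<exists>x\<in>topspace X. g x = x))"

lemma fixed_point_property_factor:
  assumes "fixed_point_property Y" and b: "continuous_map X Y b" and a: "continuous_map Y X a"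
  shows "\<exists>x\<in>topspace X. a (b x) = x"
proof -
  obtain y where y: "y \<in> topspace Y" "b (a y) = y"
    using assms(1) continuous_map_compose[OF a b] by (auto simp: fixed_point_property_def o_def)
  have "a y \<in> topspace X"
    using a y(1) by (simp add: continuous_map_def Pi_iff)
  with y(2) show ?thesis by metis
qed

lemma fixed_point_property_retraction_maps:
  assumes "fixed_point_property X" and "retraction_maps X Y r s"
  shows "fixed_point_property Y"
  unfolding fixed_point_property_def
proof (intro allI impI)
  fix g assume g: "continuous_map Y Y g"
  have r: "continuous_map X Y r" and s: "continuous_map Y X s" and rs: "\<forall>y\<in>topspace Y. r (s y) = y"
    using assms(2) by (auto simp: retraction_maps_def)
  obtain y where y: "y \<in> topspace Y" "r (s (g y)) = y"
    using fixed_point_property_factor[OF assms(1) continuous_map_compose[OF g s] r] by (auto simp: o_def)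
  moreover have "g y \<in> topspace Y"
    using g y(1) by (simp add: continuous_map_def Pi_iff)
  ultimately show "\<exists>y\<in>topspace Y. g y = y"
    using rs by metis
qed

definition ndisc :: "nat \<Rightarrow> (nat \<Rightarrow> real) topology" where
  "ndisc n = subtopology (powertop_real UNIV) {x. (\<Sum>i\<le>n. x i ^ 2) \<le> 1 \<and> (\<forall>i>n. x i = 0)}"

lemma topspace_ndisc: "topspace (ndisc n) = {x. (\<Sum>i\<le>n. x i ^ 2) \<le> 1 \<and> (\<forall>i>n. x i = 0)}"
  by (simp add: ndisc_def)

lemma topspace_nsphere: "topspace (nsphere n) = {x. (\<Sum>i\<le>n. x i ^ 2) = 1 \<and> (\<forall>i>n. x i = 0)}"
  by (simp add: nsphere)

lemma continuous_map_ndisc_projection: "continuous_map (ndisc n) euclideanreal (\<lambda>x. x k)"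
  unfolding ndisc_def
  by (blast intro: continuous_map_from_subtopology [OF continuous_map_product_projection])

definition sphere_normalize :: "nat \<Rightarrow> (nat \<Rightarrow> real) \<Rightarrow> nat \<Rightarrow> real" where
  "sphere_normalize n x = (\<lambda>i. x i / sqrt (\<Sum>k\<le>n. x k ^ 2))"

lemma continuous_map_sphere_normalize:
  assumes cont: "\<And>i. continuous_map X euclideanreal (\<lambda>z. A z i)"
    and nonzero: "\<And>z. z \<in> topspace X \<Longrightarrow> (\<Sum>k\<le>n. A z k ^ 2) \<noteq> 0"
    and vanish: "\<And>z i. z \<in> topspace X \<Longrightarrow> n < i \<Longrightarrow> A z i = 0"
  shows "continuous_map X (nsphere n) (\<lambda>z. sphere_normalize n (A z))"
proof -
  have "continuous_map X (powertop_real UNIV) (\<lambda>z. sphere_normalize n (A z))"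
    unfolding continuous_map_componentwise_UNIV sphere_normalize_def
    using nonzero by (intro allI continuous_intros cont) auto
  moreover have "sphere_normalize n (A z) \<in> topspace (nsphere n)" if z: "z \<in> topspace X" for z
  proof -
    have pos: "0 < (\<Sum>k\<le>n. A z k ^ 2)"
      using nonzero[OF z] by (metis less_eq_real_def sum_nonneg zero_le_power2)
    have "(\<Sum>i\<le>n. (A z i / sqrt (\<Sum>k\<le>n. A z k ^ 2)) ^ 2) = 1"
      using pos by (simp add: power_divide flip: sum_divide_distrib)
    then show ?thesis
      using vanish[OF z] by (simp add: topspace_nsphere sphere_normalize_def)
  qed
  ultimately show ?thesis
    by (auto simp: nsphere continuous_map_in_subtopology)
qed

lemma continuous_map_homotopy_coordinates_nsphere:
  "continuous_map (prod_topology (top_of_set {0..1::real}) (nsphere n)) euclideanreal fst"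
  "continuous_map (prod_topology (top_of_set {0..1::real}) (nsphere n)) euclideanreal (\<lambda>z. snd z i)"
  using continuous_map_compose[OF continuous_map_snd continuous_map_nsphere_projection]
  by (auto simp: o_def intro: continuous_map_into_fulltopology[OF continuous_map_fst])

lemma nullhomotopic_if_extends_to_ndisc:
  assumes h: "continuous_map (ndisc n) (nsphere n) h"
  shows "homotopic_with (\<lambda>x. True) (nsphere n) (nsphere n) (\<lambda>x. h (\<lambda>i. 0)) h"
proof -
  let ?X = "prod_topology (top_of_set {0..1::real}) (nsphere n)"
  have "continuous_map ?X (powertop_real UNIV) (\<lambda>z i. fst z * snd z i)"
    unfolding continuous_map_componentwise_UNIV
    by (intro allI continuous_intros continuous_map_homotopy_coordinates_nsphere)
  moreover have "(\<lambda>i. t * x i) \<in> topspace (ndisc n)"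
    if "t \<in> {0..1}" "x \<in> topspace (nsphere n)" for t x
  proof -
    have "(\<Sum>i\<le>n. (t * x i) ^ 2) = t ^ 2"
      using that by (simp add: topspace_nsphere power_mult_distrib flip: sum_distrib_left)
    also have "\<dots> \<le> 1"
      using that by (simp add: power_le_one)
    finally show ?thesis
      using that by (simp add: topspace_ndisc topspace_nsphere)
  qed
  ultimately have "continuous_map ?X (ndisc n) (\<lambda>z i. fst z * snd z i)"
    unfolding ndisc_def continuous_map_in_subtopology by (auto simp: topspace_ndisc)
  then have "continuous_map ?X (nsphere n) (\<lambda>z. h (\<lambda>i. fst z * snd z i))"
    using continuous_map_compose[OF _ h] by (simp add: o_def)
  then show ?thesis
    unfolding homotopic_with_def by (intro exI[where x="\<lambda>z. h (\<lambda>i. fst z * snd z i)"]) simp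
qed

lemma nsphere_eq_scaled_ndisc:
  assumes x: "x \<in> topspace (nsphere n)" and y: "y \<in> topspace (ndisc n)"
    and t: "0 \<le> t" "t \<le> 1" and eq: "\<And>k. k \<le> n \<Longrightarrow> x k = t * y k"
  shows "x = y"
proof -
  have "1 = (\<Sum>k\<le>n. x k ^ 2)"
    using x by (simp add: topspace_nsphere)
  also have "\<dots> = t ^ 2 * (\<Sum>k\<le>n. y k ^ 2)"
    using eq by (simp add: power_mult_distrib sum_distrib_left)
  also have "\<dots> \<le> t ^ 2"
    using y by (intro mult_left_le) (auto simp: topspace_ndisc)
  also have "\<dots> \<le> t"
    using t by (simp add: power2_eq_square mult_left_le_one_le)
  finally have "t = 1"
    using t by linarith
  show ?thesis
  proof
    fix k
    show "x k = y k"
      using eq[of k] \<open>t = 1\<close> x y by (cases "k \<le> n") (auto simp: topspace_nsphere topspace_ndisc)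
  qed
qed

text \<open>Without a fixed point, \<open>x - t g x\<close> never vanishes on the sphere, so normalising it deforms
  the identity of the sphere into the restriction of a map defined on the whole disc.\<close>

lemma homotopic_id_sphere_normalize_displacement:
  assumes g: "continuous_map (ndisc n) (ndisc n) g"
    and no_fix: "\<And>x. x \<in> topspace (ndisc n) \<Longrightarrow> g x \<noteq> x"
  shows "homotopic_with (\<lambda>x. True) (nsphere n) (nsphere n) id
           (\<lambda>x. sphere_normalize n (\<lambda>i. x i - g x i))"
proof -
  let ?X = "prod_topology (top_of_set {0..1::real}) (nsphere n)"
  have sphere_disc: "topspace (nsphere n) \<subseteq> topspace (ndisc n)"
    by (auto simp: topspace_nsphere topspace_ndisc)
  have gD: "g x \<in> topspace (ndisc n)" if "x \<in> topspace (ndisc n)" for x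
    using g that by (simp add: continuous_map_def Pi_iff)
  have c_g: "continuous_map ?X euclideanreal (\<lambda>z. g (snd z) i)" for i
  proof -
    have "continuous_map (ndisc n) euclideanreal (\<lambda>x. g x i)"
      using continuous_map_compose[OF g continuous_map_ndisc_projection] by (simp add: o_def)
    then have "continuous_map (nsphere n) euclideanreal (\<lambda>x. g x i)"
      unfolding ndisc_def nsphere by (rule continuous_map_from_subtopology_mono) auto
    then show ?thesis
      using continuous_map_compose[OF continuous_map_snd] by (simp add: o_def)
  qed
  have "continuous_map ?X (nsphere n) (\<lambda>z. sphere_normalize n (\<lambda>i. snd z i - fst z * g (snd z) i))"
  proof (rule continuous_map_sphere_normalize)
    show "continuous_map ?X euclideanreal (\<lambda>z. snd z i - fst z * g (snd z) i)" for i
      by (intro continuous_intros continuous_map_homotopy_coordinates_nsphere c_g)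
  next
    fix z assume z: "z \<in> topspace ?X"
    then have x: "snd z \<in> topspace (nsphere n)" and t: "0 \<le> fst z" "fst z \<le> 1"
      by auto
    show "(\<Sum>k\<le>n. (snd z k - fst z * g (snd z) k) ^ 2) \<noteq> 0"
    proof
      assume "(\<Sum>k\<le>n. (snd z k - fst z * g (snd z) k) ^ 2) = 0"
      moreover have "g (snd z) \<in> topspace (ndisc n)"
        using gD x sphere_disc by blast
      ultimately have "snd z = g (snd z)"
        using nsphere_eq_scaled_ndisc[OF x _ t] by (simp add: sum_nonneg_eq_0_iff)
      then show False
        using no_fix x sphere_disc by (metis subsetD)
    qed
    show "snd z i - fst z * g (snd z) i = 0" if "n < i" for i
      using that x sphere_disc gD[of "snd z"] by (auto simp: topspace_nsphere topspace_ndisc)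
  qed
  moreover have "sphere_normalize n (\<lambda>i. x i - 0 * g x i) = id x" if "x \<in> topspace (nsphere n)" for x
    using that by (simp add: sphere_normalize_def topspace_nsphere)
  ultimately show ?thesis
    by (subst homotopic_with) (auto intro!: exI[where x="\<lambda>z. sphere_normalize n (\<lambda>i. snd z i - fst z * g (snd z) i)"])
qed

lemma continuous_map_sphere_normalize_displacement:
  assumes g: "continuous_map (ndisc n) (ndisc n) g"
    and no_fix: "\<And>x. x \<in> topspace (ndisc n) \<Longrightarrow> g x \<noteq> x"
  shows "continuous_map (ndisc n) (nsphere n) (\<lambda>x. sphere_normalize n (\<lambda>i. x i - g x i))"
proof (rule continuous_map_sphere_normalize)
  show "continuous_map (ndisc n) euclideanreal (\<lambda>x. x i - g x i)" for i
    using continuous_map_compose[OF g continuous_map_ndisc_projection]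
    by (intro continuous_intros continuous_map_ndisc_projection) (simp add: o_def)
next
  fix x assume x: "x \<in> topspace (ndisc n)"
  then have gx: "g x \<in> topspace (ndisc n)"
    using g by (simp add: continuous_map_def Pi_iff)
  show "(\<Sum>k\<le>n. (x k - g x k) ^ 2) \<noteq> 0"
  proof
    assume "(\<Sum>k\<le>n. (x k - g x k) ^ 2) = 0"
    then have eq: "\<And>k. k \<le> n \<Longrightarrow> x k = g x k"
      by (simp add: sum_nonneg_eq_0_iff)
    have "g x = x"
    proof
      fix k
      show "g x k = x k"
        using eq[of k] x gx by (cases "k \<le> n") (auto simp: topspace_ndisc)
    qed
    then show False
      using no_fix x by blast
  qed
  show "x i - g x i = 0" if "n < i" for i
    using that x gx by (simp add: topspace_ndisc)
qed

theorem fixed_point_property_ndisc: "fixed_point_property (ndisc n)"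
  unfolding fixed_point_property_def
proof (intro allI impI)
  fix g assume g: "continuous_map (ndisc n) (ndisc n) g"
  show "\<exists>x\<in>topspace (ndisc n). g x = x"
  proof (rule ccontr)
    assume "\<not> ?thesis"
    then have no_fix: "\<And>x. x \<in> topspace (ndisc n) \<Longrightarrow> g x \<noteq> x"
      by blast
    have "contractible_space (nsphere n)"
      unfolding contractible_space_def
      using homotopic_with_trans[OF homotopic_id_sphere_normalize_displacement[OF g no_fix]
          homotopic_with_symD[OF nullhomotopic_if_extends_to_ndisc
            [OF continuous_map_sphere_normalize_displacement[OF g no_fix]]]]
      by blast
    then show False
      using non_contractible_space_nsphere by blast
  qed
qed

lemma standard_simplex_subset_ndisc: "standard_simplex p \<subseteq> topspace (ndisc p)"
proof
  fix x assume x: "x \<in> standard_simplex p"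
  have "(\<Sum>i\<le>p. x i ^ 2) \<le> (\<Sum>i\<le>p. x i)"
    using x by (intro sum_mono) (auto simp: standard_simplex_def power2_eq_square mult_left_le_one_le)
  with x show "x \<in> topspace (ndisc p)"
    by (simp add: standard_simplex_def topspace_ndisc)
qed

definition simplex_retraction :: "nat \<Rightarrow> (nat \<Rightarrow> real) \<Rightarrow> nat \<Rightarrow> real" where
  "simplex_retraction p x i =
     (if i < p then max 0 (x i) / max 1 (\<Sum>k<p. max 0 (x k))
      else if i = p then 1 - (\<Sum>k<p. max 0 (x k)) / max 1 (\<Sum>k<p. max 0 (x k))
      else 0)"

lemma continuous_map_simplex_retraction:
  "continuous_map (ndisc p) euclideanreal (\<lambda>x. simplex_retraction p x i)"
proof -
  have mass: "continuous_map (ndisc p) euclideanreal (\<lambda>x. max 1 (\<Sum>k<p. max 0 (x k)))"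
    by (intro continuous_intros continuous_map_ndisc_projection) auto
  have nonzero: "max 1 (\<Sum>k<p. max 0 (x k)) \<noteq> 0" for x :: "nat \<Rightarrow> real"
    by (metis max.cobounded1 not_one_le_zero)
  consider "i < p" | "i = p" | "p < i"
    by linarith
  then show ?thesis
  proof cases
    case 1
    have "continuous_map (ndisc p) euclideanreal (\<lambda>x. max 0 (x i) / max 1 (\<Sum>k<p. max 0 (x k)))"
      by (intro continuous_intros continuous_map_ndisc_projection mass) (simp add: nonzero)
    with 1 show ?thesis
      by (simp add: simplex_retraction_def)
  next
    case 2
    have "continuous_map (ndisc p) euclideanreal
            (\<lambda>x. 1 - (\<Sum>k<p. max 0 (x k)) / max 1 (\<Sum>k<p. max 0 (x k)))"
      by (intro continuous_intros continuous_map_ndisc_projection mass) (auto simp: nonzero)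
    with 2 show ?thesis
      by (simp add: simplex_retraction_def)
  next
    case 3
    then show ?thesis
      by (simp add: simplex_retraction_def)
  qed
qed

lemma simplex_retraction_in_standard_simplex: "simplex_retraction p x \<in> standard_simplex p"
proof -
  let ?m = "\<Sum>k<p. max 0 (x k)"
  have "max 0 (x i) \<le> max 1 ?m" if "i < p" for i
    using member_le_sum[of i "{..<p}" "\<lambda>k. max 0 (x k)"] that by (simp add: max.coboundedI2)
  moreover have "0 \<le> ?m / max 1 ?m" "?m / max 1 ?m \<le> 1"
    by (simp_all add: sum_nonneg)
  moreover have "(\<Sum>i\<le>p. simplex_retraction p x i) = 1"
    by (simp add: simplex_retraction_def lessThan_Suc_atMost[symmetric] flip: sum_divide_distrib)
  ultimately show ?thesis
    by (auto simp: standard_simplex_def simplex_retraction_def)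
qed

lemma simplex_retraction_id:
  assumes x: "x \<in> standard_simplex p"
  shows "simplex_retraction p x = x"
proof -
  have "x p = 1 - (\<Sum>k<p. x k)" and "0 \<le> x p"
    using x by (simp_all add: standard_simplex_def lessThan_Suc_atMost[symmetric])
  then have "(\<Sum>k<p. x k) \<le> 1" and "x p = 1 - (\<Sum>k<p. x k)"
    by simp_all
  moreover have "max 0 (x k) = x k" for k
    using x by (simp add: standard_simplex_def)
  ultimately show ?thesis
    using x by (auto simp: simplex_retraction_def standard_simplex_def fun_eq_iff)
qed

lemma retraction_maps_ndisc_standard_simplex:
  "retraction_maps (ndisc p) (subtopology (powertop_real UNIV) (standard_simplex p)) (simplex_retraction p) id"
  unfolding retraction_maps_def
proof (intro conjI)
  show "continuous_map (ndisc p) (subtopology (powertop_real UNIV) (standard_simplex p)) (simplex_retraction p)"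
    using continuous_map_simplex_retraction simplex_retraction_in_standard_simplex
    by (auto simp: continuous_map_in_subtopology continuous_map_componentwise_UNIV)
  show "continuous_map (subtopology (powertop_real UNIV) (standard_simplex p)) (ndisc p) id"
    using standard_simplex_subset_ndisc[of p] unfolding ndisc_def
    by (auto simp: continuous_map_in_subtopology intro: continuous_map_from_subtopology)
qed (simp add: simplex_retraction_id)

corollary fixed_point_property_standard_simplex:
  "fixed_point_property (subtopology (powertop_real UNIV) (standard_simplex p))"
  using fixed_point_property_ndisc retraction_maps_ndisc_standard_simplex
  by (rule fixed_point_property_retraction_maps)

lemma tvs_topspace: "tvs T \<Longrightarrow> topspace T = UNIV"
  by (simp add: tvs_def)

lemma continuous_map_tvs_const: "tvs T \<Longrightarrow> continuous_map Z T (\<lambda>z. c)"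
  by (simp add: tvs_def)

lemma continuous_map_tvs_add:
  assumes "tvs T" "continuous_map Z T F" "continuous_map Z T G"
  shows "continuous_map Z T (\<lambda>z. F z + G z)"
proof -
  have "continuous_map (prod_topology T T) T (\<lambda>(x, y). x + y)"
    using assms(1) by (simp add: tvs_def)
  from continuous_map_compose[OF continuous_map_pairedI[OF assms(2,3)] this] show ?thesis
    by (simp add: o_def)
qed

lemma continuous_map_tvs_scaleR:
  assumes "tvs T" "continuous_map Z euclideanreal a" "continuous_map Z T F"
  shows "continuous_map Z T (\<lambda>z. a z *\<^sub>R F z)"
proof -
  have "continuous_map (prod_topology euclideanreal T) T (\<lambda>(a, x). a *\<^sub>R x)"
    using assms(1) by (simp add: tvs_def)
  from continuous_map_compose[OF continuous_map_pairedI[OF assms(2,3)] this] show ?thesis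
    by (simp add: o_def)
qed

lemma continuous_map_tvs_diff:
  assumes "tvs T" "continuous_map Z T F" "continuous_map Z T G"
  shows "continuous_map Z T (\<lambda>z. F z - G z)"
proof -
  have "continuous_map Z T (\<lambda>z. F z + (-1) *\<^sub>R G z)"
    by (intro continuous_map_tvs_add continuous_map_tvs_scaleR assms continuous_map_canonical_const)
  then show ?thesis
    by simp
qed

lemma continuous_map_tvs_sum:
  assumes "tvs T" "finite A" "\<And>j. j \<in> A \<Longrightarrow> continuous_map Z euclideanreal (a j)"
  shows "continuous_map Z T (\<lambda>z. \<Sum>j\<in>A. a j z *\<^sub>R v j)"
  using assms(2,3)
proof (induction A rule: finite_induct)
  case empty
  then show ?case
    using continuous_map_tvs_const[OF assms(1)] by simp
next
  case (insert j A)
  then show ?case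
    by (simp, intro continuous_map_tvs_add continuous_map_tvs_scaleR continuous_map_tvs_const assms(1)) auto
qed

lemma continuous_map_convex_combination_standard_simplex:
  assumes tvs: "tvs T" and "convex C" and x: "\<And>j. j \<le> N \<Longrightarrow> x j \<in> C"
  shows "continuous_map (subtopology (powertop_real UNIV) (standard_simplex N)) (subtopology T C)
           (\<lambda>l. \<Sum>j\<le>N. l j *\<^sub>R x j)"
proof -
  have "continuous_map (subtopology (powertop_real UNIV) (standard_simplex N)) T (\<lambda>l. \<Sum>j\<le>N. l j *\<^sub>R x j)"
    by (intro continuous_map_tvs_sum[where a="\<lambda>j l. l j"] tvs finite_atMost
        continuous_map_from_subtopology continuous_map_product_projection) simp
  moreover have "(\<Sum>j\<le>N. l j *\<^sub>R x j) \<in> C" if "l \<in> standard_simplex N" for l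
    using that x by (intro convex_sum \<open>convex C\<close>) (auto simp: standard_simplex_def)
  ultimately show ?thesis
    by (auto simp: continuous_map_in_subtopology)
qed

lemma fixed_point_through_standard_simplex:
  fixes N :: nat
  assumes tvs: "tvs T" and "convex C" and x: "\<And>j. j \<le> N \<Longrightarrow> x j \<in> C"
    and \<psi>_cont: "\<And>j. j \<le> N \<Longrightarrow> continuous_map (subtopology T C) euclideanreal (\<psi> j)"
    and \<psi>_nonneg: "\<And>j y. 0 \<le> \<psi> j y" and \<psi>_sum: "\<And>y. y \<in> C \<Longrightarrow> (\<Sum>j\<le>N. \<psi> j y) = 1"
    and f: "continuous_map (subtopology T C) (subtopology T C) f"
  shows "\<exists>y\<in>C. f (\<Sum>j\<le>N. \<psi> j y *\<^sub>R x j) = y"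
proof -
  define b where "b y = (\<lambda>j. if j \<le> N then \<psi> j y else 0)" for y
  have b_sum: "(\<Sum>j\<le>N. b y j *\<^sub>R x j) = (\<Sum>j\<le>N. \<psi> j y *\<^sub>R x j)"
    and b_mass: "(\<Sum>j\<le>N. b y j) = (\<Sum>j\<le>N. \<psi> j y)" for y
    by (rule sum.cong; simp add: b_def)+
  have "continuous_map (subtopology T C) euclideanreal (\<lambda>y. b y j)" for j
    using \<psi>_cont[of j] by (cases "j \<le> N") (simp_all add: b_def)
  moreover have "b y \<in> standard_simplex N" if y: "y \<in> C" for y
  proof -
    have "\<psi> j y \<le> 1" if "j \<le> N" for j
      using member_le_sum[of j "{..N}" "\<lambda>j. \<psi> j y"] \<psi>_nonneg \<psi>_sum[OF y] that by simp
    then show ?thesis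
      using \<psi>_nonneg \<psi>_sum[OF y] b_mass[of y] by (simp add: standard_simplex_def b_def)
  qed
  ultimately have "continuous_map (subtopology T C) (subtopology (powertop_real UNIV) (standard_simplex N)) b"
    using tvs_topspace[OF tvs] by (auto simp: continuous_map_in_subtopology continuous_map_componentwise_UNIV)
  from fixed_point_property_factor[OF fixed_point_property_standard_simplex this
      continuous_map_compose[OF continuous_map_convex_combination_standard_simplex[where x=x, OF tvs \<open>convex C\<close> x] f]]
  show ?thesis
    using tvs_topspace[OF tvs] by (simp add: b_sum)
qed

lemma compactin_indexed_finite_subcover:
  assumes "compactin X K" "\<And>i. i \<in> I \<Longrightarrow> openin X (V i)" "K \<subseteq> (\<Union>i\<in>I. V i)"
  obtains J where "finite J" "J \<subseteq> I" "K \<subseteq> (\<Union>i\<in>J. V i)"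
proof -
  have "\<And>U. U \<in> V ` I \<Longrightarrow> openin X U"
    using assms(2) by blast
  from compactinD[OF assms(1) this assms(3)]
  obtain \<F> where "finite \<F>" "\<F> \<subseteq> V ` I" "K \<subseteq> \<Union>\<F>"
    by blast
  moreover from this obtain J where "J \<subseteq> I" "finite J" "\<F> = V ` J"
    by (meson finite_subset_image)
  ultimately show thesis
    by (intro that[of J]) auto
qed

lemma compactin_finite_subcover_by_points:
  assumes "compactin X C" "C \<noteq> {}" "\<And>c. c \<in> C \<Longrightarrow> openin X (V c)" "\<And>c. c \<in> C \<Longrightarrow> c \<in> V c"
  obtains N :: nat and x where "\<And>j. j \<le> N \<Longrightarrow> x j \<in> C" "\<And>y. y \<in> C \<Longrightarrow> \<exists>j\<le>N. y \<in> V (x j)"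
proof -
  have "C \<subseteq> (\<Union>c\<in>C. V c)"
    using assms(4) by blast
  obtain S where S: "finite S" "S \<subseteq> C" and cover: "C \<subseteq> (\<Union>c\<in>S. V c)"
    by (rule compactin_indexed_finite_subcover[OF assms(1,3) \<open>C \<subseteq> (\<Union>c\<in>C. V c)\<close>])
  obtain M :: nat and x where Sx: "S = x ` {..<M}"
    using finite_imp_nat_seg_image_inj_on[OF S(1)] by (metis lessThan_def)
  with cover assms(2) have "M \<noteq> 0"
    by auto
  then obtain N where "{..<M} = {..N}"
    by (metis lessThan_Suc_atMost not0_implies_Suc)
  with S Sx cover have "\<And>j. j \<le> N \<Longrightarrow> x j \<in> C" "\<And>y. y \<in> C \<Longrightarrow> \<exists>j\<le>N. y \<in> V (x j)"
    by auto
  then show thesis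
    by (rule that)
qed

lemma finite_partition_of_unity_subordinate:
  assumes C: "compactin X C" "C \<noteq> {}"
    and \<kappa>_cont: "\<And>c. c \<in> C \<Longrightarrow> continuous_map X euclideanreal (\<kappa> c)"
    and \<kappa>_nonneg: "\<And>c y. 0 \<le> \<kappa> c y" and \<kappa>_pos: "\<And>c. c \<in> C \<Longrightarrow> 0 < \<kappa> c c"
  obtains N :: nat and x \<psi> where "\<And>j. j \<le> N \<Longrightarrow> x j \<in> C"
    and "\<And>j. j \<le> N \<Longrightarrow> continuous_map (subtopology X C) euclideanreal (\<psi> j)"
    and "\<And>j y. 0 \<le> \<psi> j y" and "\<And>y. y \<in> C \<Longrightarrow> (\<Sum>j\<le>N. \<psi> j y) = 1"
    and "\<And>j y. 0 < \<psi> j y \<Longrightarrow> 0 < \<kappa> (x j) y"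
proof -
  define cozero where "cozero c = {y \<in> topspace X. \<kappa> c y \<in> {0<..}}" for c
  have "openin X (cozero c)" if "c \<in> C" for c
    unfolding cozero_def using \<kappa>_cont[OF that] by (rule openin_continuous_map_preimage) simp
  moreover have "c \<in> cozero c" if "c \<in> C" for c
    using \<kappa>_pos[OF that] that compactin_subset_topspace[OF C(1)] by (auto simp: cozero_def)
  ultimately obtain N :: nat and x where x: "\<And>j. j \<le> N \<Longrightarrow> x j \<in> C"
    and covered: "\<And>y. y \<in> C \<Longrightarrow> \<exists>j\<le>N. y \<in> cozero (x j)"
    using compactin_finite_subcover_by_points[OF C, of cozero] by blast
  define \<sigma> where "\<sigma> y = (\<Sum>k\<le>N. \<kappa> (x k) y)" for y
  have \<sigma>_pos: "0 < \<sigma> y" if y: "y \<in> C" for y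
  proof -
    obtain j where "j \<le> N" "0 < \<kappa> (x j) y"
      using covered[OF y] by (auto simp: cozero_def)
    moreover have "\<kappa> (x j) y \<le> \<sigma> y" if "j \<le> N"
      unfolding \<sigma>_def using that \<kappa>_nonneg by (intro member_le_sum) auto
    ultimately show ?thesis
      by fastforce
  qed
  show thesis
  proof (rule that[of N x "\<lambda>j y. \<kappa> (x j) y / \<sigma> y"])
    show "continuous_map (subtopology X C) euclideanreal (\<lambda>y. \<kappa> (x j) y / \<sigma> y)" if "j \<le> N" for j
      unfolding \<sigma>_def using x that \<sigma>_pos[unfolded \<sigma>_def]
      by (intro continuous_intros continuous_map_from_subtopology \<kappa>_cont) (auto, fastforce)
    show "(\<Sum>j\<le>N. \<kappa> (x j) y / \<sigma> y) = 1" if "y \<in> C" for y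
      using \<sigma>_pos[OF that] by (simp add: \<sigma>_def flip: sum_divide_distrib)
    show "0 \<le> \<kappa> (x j) y / \<sigma> y" for j y
      by (simp add: \<sigma>_def \<kappa>_nonneg sum_nonneg)
    show "0 < \<kappa> (x j) y" if "0 < \<kappa> (x j) y / \<sigma> y" for j y
      using that \<kappa>_nonneg[of "x j" y] by (auto simp: zero_less_divide_iff)
  qed (use x in blast)
qed

lemma convex_sum_on_support:
  fixes y :: "'i \<Rightarrow> 'a::real_vector"
  assumes "convex S" "finite A" "(\<Sum>i\<in>A. a i) = 1" "\<And>i. i \<in> A \<Longrightarrow> 0 \<le> a i"
    and "\<And>i. i \<in> A \<Longrightarrow> 0 < a i \<Longrightarrow> y i \<in> S"
  shows "(\<Sum>i\<in>A. a i *\<^sub>R y i) \<in> S"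
proof -
  let ?B = "{i\<in>A. 0 < a i}"
  have zero: "a i = 0" if "i \<in> A - ?B" for i
    using assms(4) that by force
  have "(\<Sum>i\<in>?B. a i) = (\<Sum>i\<in>A. a i)" and "(\<Sum>i\<in>?B. a i *\<^sub>R y i) = (\<Sum>i\<in>A. a i *\<^sub>R y i)"
    by (rule sum.mono_neutral_left; use assms(2) zero in auto)+
  moreover have "(\<Sum>i\<in>?B. a i *\<^sub>R y i) \<in> S"
    using assms calculation(1) by (intro convex_sum) auto
  ultimately show ?thesis
    by simp
qed

text \<open>The witness is \<open>z = \<Sum>j \<psi>\<^sub>j(y) x\<^sub>j\<close> with \<open>f z = y\<close>, for a partition of unity \<open>\<psi>\<close> on \<open>C\<close>
  subordinate to the translates \<open>x\<^sub>j - V\<close> of \<open>V = {w. 0 < \<phi> w}\<close>: then \<open>z - f z = \<Sum>j \<psi>\<^sub>j(y) (x\<^sub>j - y)\<close>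
  is a convex combination of points of \<open>V\<close>.\<close>

lemma approximate_fixed_point:
  assumes tvs: "tvs T" and C: "compactin T C" "convex C" "C \<noteq> {}"
    and f: "continuous_map (subtopology T C) (subtopology T C) f"
    and \<phi>: "continuous_map T euclideanreal \<phi>" "0 < \<phi> 0" "convex {w. 0 < \<phi> w}"
  shows "\<exists>z\<in>C. 0 < \<phi> (z - f z)"
proof -
  define \<kappa> where "\<kappa> c y = max 0 (\<phi> (c - y))" for c y
  have \<kappa>_nonneg: "0 \<le> \<kappa> c y" and \<kappa>_pos: "0 < \<kappa> c c" for c y
    using \<phi>(2) by (simp_all add: \<kappa>_def)
  have \<kappa>_cont: "continuous_map T euclideanreal (\<kappa> c)" for c
  proof -
    have "continuous_map T T (\<lambda>y. c - y)"
      by (intro continuous_map_tvs_diff[OF tvs] continuous_map_tvs_const[OF tvs]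
          continuous_map_id[unfolded id_def])
    then show ?thesis
      unfolding \<kappa>_def using continuous_map_compose[OF _ \<phi>(1)]
      by (intro continuous_intros) (simp add: o_def)
  qed
  obtain N and x :: "nat \<Rightarrow> 'a" and \<psi> where x: "\<And>j. j \<le> N \<Longrightarrow> x j \<in> C"
    and \<psi>_cont: "\<And>j. j \<le> N \<Longrightarrow> continuous_map (subtopology T C) euclideanreal (\<psi> j)"
    and \<psi>_nonneg: "\<And>j y. 0 \<le> \<psi> j y" and \<psi>_sum: "\<And>y. y \<in> C \<Longrightarrow> (\<Sum>j\<le>N. \<psi> j y) = 1"
    and \<psi>_pos: "\<And>j y. 0 < \<psi> j y \<Longrightarrow> 0 < \<kappa> (x j) y"
    using finite_partition_of_unity_subordinate[OF C(1,3) \<kappa>_cont \<kappa>_nonneg \<kappa>_pos] by blast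
  obtain y where y: "y \<in> C" and fy: "f (\<Sum>j\<le>N. \<psi> j y *\<^sub>R x j) = y"
    using fixed_point_through_standard_simplex[where x=x and \<psi>=\<psi>, OF tvs C(2) x \<psi>_cont \<psi>_nonneg \<psi>_sum f] by blast
  define z where "z = (\<Sum>j\<le>N. \<psi> j y *\<^sub>R x j)"
  have "z \<in> C"
    unfolding z_def using x \<psi>_nonneg \<psi>_sum[OF y] by (intro convex_sum C(2)) auto
  moreover have "z - f z = (\<Sum>j\<le>N. \<psi> j y *\<^sub>R (x j - y))"
    using \<psi>_sum[OF y] by (simp add: z_def fy scaleR_diff_right sum_subtractf flip: scaleR_sum_left)
  moreover have "(\<Sum>j\<le>N. \<psi> j y *\<^sub>R (x j - y)) \<in> {w. 0 < \<phi> w}"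
    using \<psi>_nonneg \<psi>_sum[OF y] \<psi>_pos by (intro convex_sum_on_support \<phi>(3)) (auto simp: \<kappa>_def less_max_iff_disj)
  ultimately show ?thesis
    by (metis mem_Collect_eq)
qed

lemma convex_strict_sublevel_m_quasiconvex:
  assumes "m_quasiconvex u"
  shows "convex {x. u x < e}"
  unfolding convex_def
proof (intro ballI allI impI)
  fix x y :: 'a and a b :: real
  assume "x \<in> {x. u x < e}" "y \<in> {x. u x < e}" "0 \<le> a" "0 \<le> b" "a + b = 1"
  then have "u (a *\<^sub>R x + (1 - a) *\<^sub>R y) < e" and "b = 1 - a"
    using assms unfolding m_quasiconvex_def by (fastforce intro: le_less_trans)+
  then show "a *\<^sub>R x + b *\<^sub>R y \<in> {x. u x < e}"
    by simp
qed

lemma quasi_point_separating_uniform_on_compactin: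
  assumes sep: "quasi_point_separating T u L" and K: "compactin T K" "0 \<notin> K"
  obtains L0 \<epsilon> where "finite L0" "L0 \<subseteq> L" "0 < \<epsilon>" "\<And>w. w \<in> K \<Longrightarrow> \<exists>l\<in>L0. \<epsilon> \<le> u l w"
proof -
  have u_cont: "\<And>l. l \<in> L \<Longrightarrow> continuous_map T euclideanreal (u l)"
    and u_nonneg: "\<And>l w. l \<in> L \<Longrightarrow> 0 \<le> u l w" and u_sep: "\<And>w. (\<forall>l\<in>L. u l w = 0) \<Longrightarrow> w = 0"
    using sep by (auto simp: quasi_point_separating_def m_quasiconvex_def)
  define level where "level l n = {w \<in> topspace T. u l w \<in> {inverse (real (Suc n))<..}}" for l n
  have "openin T (level l n)" if "l \<in> L" for l n
    unfolding level_def using u_cont[OF that] by (rule openin_continuous_map_preimage) simp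
  then have opens: "openin T (case_prod level ln)" if "ln \<in> L \<times> UNIV" for ln
    using that by auto
  have covers: "K \<subseteq> (\<Union>(l, n)\<in>L \<times> UNIV. level l n)"
  proof
    fix w assume w: "w \<in> K"
    then obtain l where l: "l \<in> L" "u l w \<noteq> 0"
      using u_sep K(2) by blast
    then have "0 < u l w"
      using u_nonneg[OF l(1), of w] by linarith
    then obtain n where "inverse (real (Suc n)) < u l w"
      by (metis ex_inverse_of_nat_less gr0_implies_Suc)
    then show "w \<in> (\<Union>(l, n)\<in>L \<times> UNIV. level l n)"
      using w l compactin_subset_topspace[OF K(1)] by (auto simp: level_def)
  qed
  obtain P where P: "finite P" "P \<subseteq> L \<times> UNIV" and cover: "K \<subseteq> (\<Union>(l, n)\<in>P. level l n)"
    by (rule compactin_indexed_finite_subcover[OF K(1) opens covers])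
  define \<epsilon> where "\<epsilon> = inverse (real (Suc (Max (snd ` P))))"
  show thesis
  proof
    show "finite (fst ` P)" "fst ` P \<subseteq> L" "0 < \<epsilon>"
      using P by (auto simp: \<epsilon>_def)
    show "\<exists>l\<in>fst ` P. \<epsilon> \<le> u l w" if w: "w \<in> K" for w
    proof -
      obtain l n where ln: "(l, n) \<in> P" "inverse (real (Suc n)) < u l w"
        using cover w by (auto simp: level_def)
      have "n \<le> Max (snd ` P)"
        using P(1) ln(1) by (force intro: Max_ge)
      then have "\<epsilon> \<le> inverse (real (Suc n))"
        unfolding \<epsilon>_def by (intro le_imp_inverse_le) auto
      with ln show ?thesis
        by force
    qed
  qed
qed

lemma compactin_displacement_image:
  assumes tvs: "tvs T" and "compactin T C" and f: "continuous_map (subtopology T C) (subtopology T C) f"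
  shows "compactin T ((\<lambda>y. y - f y) ` C)"
proof -
  have "continuous_map (subtopology T C) T (\<lambda>y. y - f y)"
    using continuous_map_tvs_diff[OF tvs continuous_map_from_subtopology[OF continuous_map_id[unfolded id_def]]
        continuous_map_into_fulltopology[OF f]] .
  then show ?thesis
    using image_compactin[of "subtopology T C" C] assms(2)
    by (simp add: compactin_subtopology)
qed

lemma positive_prod_max_iff:
  fixes g :: "'i \<Rightarrow> real"
  assumes "finite A"
  shows "0 < (\<Prod>i\<in>A. max 0 (g i)) \<longleftrightarrow> (\<forall>i\<in>A. 0 < g i)"
proof
  assume pos: "0 < (\<Prod>i\<in>A. max 0 (g i))"
  show "\<forall>i\<in>A. 0 < g i"
  proof
    fix i assume "i \<in> A"
    with assms pos have "max 0 (g i) \<noteq> 0"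
      by (metis prod_zero_iff less_irrefl)
    then show "0 < g i"
      by (simp add: max_def split: if_splits)
  qed
qed (auto intro: prod_pos)

lemma quasi_point_separating_convex_cozero_avoiding:
  assumes sep: "quasi_point_separating T u L" and K: "compactin T K" "0 \<notin> K"
  obtains \<phi> where "continuous_map T euclideanreal \<phi>" "0 < \<phi> 0" "convex {w. 0 < \<phi> w}"
    and "\<And>w. w \<in> K \<Longrightarrow> \<phi> w \<le> 0"
proof -
  obtain L0 \<epsilon> where L0: "finite L0" "L0 \<subseteq> L" "0 < \<epsilon>" and far: "\<And>w. w \<in> K \<Longrightarrow> \<exists>l\<in>L0. \<epsilon> \<le> u l w"
    using quasi_point_separating_uniform_on_compactin[OF sep K] by blast
  have u_cont: "continuous_map T euclideanreal (u l)" and u_qc: "m_quasiconvex (u l)" if "l \<in> L0" for l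
    using sep L0(2) that by (auto simp: quasi_point_separating_def)
  define \<phi> where "\<phi> w = (\<Prod>l\<in>L0. max 0 (\<epsilon> - u l w))" for w
  have cozero: "{w. 0 < \<phi> w} = (\<Inter>l\<in>L0. {w. u l w < \<epsilon>})"
    using L0(1) by (auto simp: \<phi>_def positive_prod_max_iff)
  show thesis
  proof
    show "continuous_map T euclideanreal \<phi>"
      unfolding \<phi>_def using L0(1) u_cont by (intro continuous_intros) auto
    have "0 \<in> (\<Inter>l\<in>L0. {w. u l w < \<epsilon>})"
      using u_qc L0(3) by (simp add: m_quasiconvex_def)
    with cozero show "0 < \<phi> 0"
      by (metis mem_Collect_eq)
    show "convex {w. 0 < \<phi> w}"
      unfolding cozero by (intro convex_INT convex_strict_sublevel_m_quasiconvex u_qc)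
    show "\<phi> w \<le> 0" if "w \<in> K" for w
      using far[OF that] cozero by (metis (mono_tags, lifting) INT_iff mem_Collect_eq not_le)
  qed
qed

theorem theorem4p1:
  fixes T :: "'a::real_vector topology"
  assumes "tvs T" and "Hausdorff_space T" and "quasi_point_separable T"
  shows "\<forall>C f. C \<noteq> {} \<and> compactin T C \<and> convex C
           \<and> continuous_map (subtopology T C) (subtopology T C) f
           \<longrightarrow> (\<exists>x0\<in>C. f x0 = x0)"
proof (intro allI impI)
  fix C f
  assume "C \<noteq> {} \<and> compactin T C \<and> convex C \<and> continuous_map (subtopology T C) (subtopology T C) f"
  then have C: "compactin T C" "convex C" "C \<noteq> {}"
    and f: "continuous_map (subtopology T C) (subtopology T C) f"
    by auto
  obtain U where U: "quasi_point_separating T (\<lambda>u. u) U"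
    using assms(3) by (auto simp: quasi_point_separable_def)
  show "\<exists>x0\<in>C. f x0 = x0"
  proof (rule ccontr)
    assume "\<not> ?thesis"
    then have "0 \<notin> (\<lambda>y. y - f y) ` C"
      by auto
    then obtain \<phi> where \<phi>: "continuous_map T euclideanreal \<phi>" "0 < \<phi> 0" "convex {w. 0 < \<phi> w}"
      and avoid: "\<And>w. w \<in> (\<lambda>y. y - f y) ` C \<Longrightarrow> \<phi> w \<le> 0"
      using quasi_point_separating_convex_cozero_avoiding[OF U compactin_displacement_image[OF assms(1) C(1) f]]
      by blast
    obtain z where "z \<in> C" "0 < \<phi> (z - f z)"
      using approximate_fixed_point[OF assms(1) C f \<phi>] by blast
    with avoid show False
      by fastforce
  qed
qed

end
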